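(* Let $p_1,\dots,p_m$ be discrete probability distributions each with (at most) $n$ states. Then there exists a minimum-entropy coupling of $p_1,\dots,p_m$ whose support (number of tuples with nonzero probability) has size at most $nm-(m-1)$.
   Context: A coupling of $p_1,\dots,p_m$ is a joint probability distribution $\mathbf P(i_1,\dots,i_m)$ on $[n]^m$ whose $k$-th marginal equals $p_k$ for every $k$ (distributions with fewer states are padded with zero-probability states). A minimum-entropy coupling minimizes the Shannon entropy $\sum_i \mathbf P(i)\log_2(1/\mathbf P(i))$ among all couplings. *)

theory Defs
  imports Main "HOL.Transcendental"
begin

text \<open>States are 0,...,n-1; joint outcomes are tuples (lists) of length m over [n].\<close>

definition tuples :: "nat \<Rightarrow> nat \<Rightarrow> nat list set" where
  "tuples n m = {xs. length xs = m \<and> set xs \<subseteq> {..<n}}"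

text \<open>A probability distribution on [n] (values outside [n] are ignored).\<close>
definition is_dist :: "nat \<Rightarrow> (nat \<Rightarrow> real) \<Rightarrow> bool" where
  "is_dist n q \<longleftrightarrow> (\<forall>i<n. 0 \<le> q i) \<and> (\<Sum>i<n. q i) = 1"

definition is_coupling :: "nat \<Rightarrow> nat \<Rightarrow> (nat \<Rightarrow> nat \<Rightarrow> real) \<Rightarrow> (nat list \<Rightarrow> real) \<Rightarrow> bool" where
  "is_coupling n m p P \<longleftrightarrow>
     (\<forall>xs\<in>tuples n m. 0 \<le> P xs) \<and> (\<Sum>xs\<in>tuples n m. P xs) = 1 \<and>
     (\<forall>k<m. \<forall>i<n. (\<Sum>xs\<in>{xs\<in>tuples n m. xs ! k = i}. P xs) = p k i)"

definition entropy :: "nat \<Rightarrow> nat \<Rightarrow> (nat list \<Rightarrow> real) \<Rightarrow> real" where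
  "entropy n m P = (\<Sum>xs\<in>tuples n m. if P xs = 0 then 0 else P xs * log 2 (1 / P xs))"

definition is_min_entropy_coupling :: "nat \<Rightarrow> nat \<Rightarrow> (nat \<Rightarrow> nat \<Rightarrow> real) \<Rightarrow> (nat list \<Rightarrow> real) \<Rightarrow> bool" where
  "is_min_entropy_coupling n m p P \<longleftrightarrow>
     is_coupling n m p P \<and> (\<forall>Q. is_coupling n m p Q \<longrightarrow> entropy n m P \<le> entropy n m Q)"

definition support :: "nat \<Rightarrow> nat \<Rightarrow> (nat list \<Rightarrow> real) \<Rightarrow> nat list set" where
  "support n m P = {xs\<in>tuples n m. P xs \<noteq> 0}"

end

theory Submission
  imports Defs
begin

text \<open>
  The couplings form a polytope on which entropy is concave, so the minimum is attained at a
  vertex. Vertices are the rigid couplings: no nonzero perturbation supported on their support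
  preserves all marginals. Starting from any coupling that is not rigid, moving along such a
  perturbation in both directions until a support point vanishes writes it as a convex combination
  of two couplings with smaller support, one of which has no larger entropy. A rigid coupling is
  determined by its support, so there are finitely many and one of them minimises entropy.
  Finally, the marginal map restricted to functions on the support of a rigid coupling is injective,
  while its image satisfies the m - 1 relations that all marginals have the same total; hence the
  support has at most nm - (m - 1) points.
\<close>

lemma homogeneous_system_nontrivial_solution:
  fixes c :: "'e \<Rightarrow> 'u \<Rightarrow> 'a::field"
  assumes "finite E" "finite V" "card E < card V"
  shows "\<exists>x. (\<forall>u. u \<notin> V \<longrightarrow> x u = 0) \<and> (\<exists>u\<in>V. x u \<noteq> 0) \<and>
             (\<forall>e\<in>E. (\<Sum>u\<in>V. c e u * x u) = 0)"
  using assms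
proof (induction E arbitrary: V c rule: finite_induct)
  case empty
  then obtain u where "u \<in> V" by fastforce
  then show ?case by (intro exI[of _ "\<lambda>w. if w = u then 1 else 0"]) auto
next
  case (insert e E V c)
  show ?case
  proof (cases "\<forall>u\<in>V. c e u = 0")
    case True
    with insert show ?thesis by fastforce
  next
    case False
    then obtain v where v: "v \<in> V" "c e v \<noteq> 0" by blast
    \<comment> \<open>Gaussian elimination: solve equation e for the unknown v and substitute.\<close>
    define c' where "c' = (\<lambda>e' u. c e' u - c e' v / c e v * c e u)"
    have "card E < card (V - {v})" using insert v by simp
    with insert.IH[of "V - {v}" c'] insert.prems obtain y where
      y: "\<forall>u. u \<notin> V - {v} \<longrightarrow> y u = 0" "\<exists>u\<in>V - {v}. y u \<noteq> 0"
         "\<forall>e'\<in>E. (\<Sum>u\<in>V - {v}. c' e' u * y u) = 0" by auto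
    define x where "x = y(v := - (\<Sum>u\<in>V - {v}. c e u * y u) / c e v)"
    have sum_x: "(\<Sum>u\<in>V. f u * x u) = f v * x v + (\<Sum>u\<in>V - {v}. f u * y u)" for f
      using v insert.prems(1) by (simp add: sum.remove x_def)
    have x_v: "x v = - (\<Sum>u\<in>V - {v}. c e u * y u) / c e v" by (simp add: x_def)
    have "(\<Sum>u\<in>V. c e' u * x u) = 0" if "e' \<in> E" for e'
    proof -
      have "(\<Sum>u\<in>V - {v}. c e' u * y u) - c e' v / c e v * (\<Sum>u\<in>V - {v}. c e u * y u) = 0"
        using y(3) that by (simp add: c'_def algebra_simps sum_subtractf sum_distrib_left)
      then show ?thesis unfolding sum_x x_v using v by (simp add: field_simps)
    qed
    moreover have "(\<Sum>u\<in>V. c e u * x u) = 0" using v by (simp add: sum_x x_v)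
    ultimately show ?thesis using y(1,2) v by (intro exI[of _ x]) (auto simp: x_def)
  qed
qed

definition entropy_term :: "real \<Rightarrow> real" where
  "entropy_term x = (if x = 0 then 0 else x * log 2 (1 / x))"

lemma entropy_eq_sum_entropy_term: "entropy n m P = (\<Sum>xs\<in>tuples n m. entropy_term (P xs))"
  by (simp add: entropy_def entropy_term_def)

lemma entropy_term_le_tangent:
  assumes "x > 0" "a \<ge> 0"
  shows "entropy_term a \<le> a * log 2 (1 / x) + (x - a) / ln 2"
proof (cases "a = 0")
  case True
  then show ?thesis using assms by (simp add: entropy_term_def)
next
  case False
  then have a: "a > 0" using assms by simp
  have "entropy_term a - a * log 2 (1 / x) = a * (ln (x / a) / ln 2)"
    using a assms by (simp add: entropy_term_def log_def ln_div algebra_simps diff_divide_distrib)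
  also have "\<dots> \<le> a * ((x / a - 1) / ln 2)"
    using a assms ln_le_minus_one[of "x / a"] by (intro mult_left_mono divide_right_mono) auto
  also have "\<dots> = (x - a) / ln 2" using a by (simp add: field_simps)
  finally show ?thesis by simp
qed

lemma entropy_term_concave:
  assumes "a \<ge> 0" "b \<ge> 0" "0 \<le> l" "l \<le> 1"
  shows "l * entropy_term a + (1 - l) * entropy_term b \<le> entropy_term (l * a + (1 - l) * b)"
proof -
  define x where "x = l * a + (1 - l) * b"
  have "l * a \<ge> 0" "(1 - l) * b \<ge> 0" using assms by simp_all
  then consider "x = 0" "l * a = 0" "(1 - l) * b = 0" | "x > 0" unfolding x_def by linarith
  then show ?thesis
  proof cases
    case 1
    then show ?thesis by (auto simp: entropy_term_def x_def[symmetric])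
  next
    case 2
    have "l * entropy_term a + (1 - l) * entropy_term b \<le>
        l * (a * log 2 (1 / x) + (x - a) / ln 2) + (1 - l) * (b * log 2 (1 / x) + (x - b) / ln 2)"
      using entropy_term_le_tangent[OF 2] assms by (intro add_mono mult_left_mono) auto
    also have "\<dots> = entropy_term x"
      using 2 by (simp add: entropy_term_def x_def algebra_simps add_divide_distrib diff_divide_distrib)
    finally show ?thesis by (simp add: x_def)
  qed
qed

lemma entropy_convex_combination_ge_min:
  assumes "\<And>xs. xs \<in> tuples n m \<Longrightarrow> Q1 xs \<ge> 0" "\<And>xs. xs \<in> tuples n m \<Longrightarrow> Q2 xs \<ge> 0"
    and "0 \<le> l" "l \<le> 1"
  shows "min (entropy n m Q1) (entropy n m Q2) \<le> entropy n m (\<lambda>xs. l * Q1 xs + (1 - l) * Q2 xs)"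
proof -
  let ?h = "min (entropy n m Q1) (entropy n m Q2)"
  have "?h = l * ?h + (1 - l) * ?h" by (simp add: algebra_simps)
  also have "\<dots> \<le> l * entropy n m Q1 + (1 - l) * entropy n m Q2"
    using assms(3,4) by (intro add_mono mult_left_mono) auto
  also have "\<dots> = (\<Sum>xs\<in>tuples n m. l * entropy_term (Q1 xs) + (1 - l) * entropy_term (Q2 xs))"
    by (simp add: entropy_eq_sum_entropy_term sum.distrib sum_distrib_left)
  also have "\<dots> \<le> entropy n m (\<lambda>xs. l * Q1 xs + (1 - l) * Q2 xs)"
    unfolding entropy_eq_sum_entropy_term using assms by (intro sum_mono entropy_term_concave) auto
  finally show ?thesis .
qed

lemma tuples_0: "tuples n 0 = {[]}"
  by (auto simp: tuples_def)

lemma tuples_Suc: "tuples n (Suc m) = (\<lambda>(x, xs). x # xs) ` ({..<n} \<times> tuples n m)"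
  by (auto simp: tuples_def image_iff length_Suc_conv)

lemma finite_tuples: "finite (tuples n m)"
  using finite_lists_length_eq[of "{..<n}" m] by (simp add: tuples_def conj_commute)

lemma sum_tuples_prod:
  "(\<Sum>xs\<in>tuples n m. \<Prod>k<m. f k (xs ! k)) = (\<Prod>k<m. \<Sum>i<n. f k i :: 'a::comm_semiring_1)"
proof (induction m arbitrary: f)
  case 0
  then show ?case by (simp add: tuples_0)
next
  case (Suc m)
  have "inj_on (\<lambda>(x, xs). x # xs) ({..<n} \<times> tuples n m)" by (auto simp: inj_on_def)
  then have "(\<Sum>xs\<in>tuples n (Suc m). \<Prod>k<Suc m. f k (xs ! k))
      = (\<Sum>(x, xs)\<in>{..<n} \<times> tuples n m. f 0 x * (\<Prod>k<m. f (Suc k) (xs ! k)))"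
    unfolding tuples_Suc by (simp add: sum.reindex case_prod_unfold prod.lessThan_Suc_shift del: prod.lessThan_Suc)
  also have "\<dots> = (\<Sum>x<n. f 0 x) * (\<Sum>xs\<in>tuples n m. \<Prod>k<m. f (Suc k) (xs ! k))"
    by (simp add: sum.cartesian_product[symmetric] sum_product)
  also have "\<dots> = (\<Prod>k<Suc m. \<Sum>i<n. f k i)"
    by (simp add: Suc.IH[of "\<lambda>k. f (Suc k)"] prod.lessThan_Suc_shift del: prod.lessThan_Suc)
  finally show ?case .
qed

lemma is_coupling_product:
  assumes "\<And>k. k < m \<Longrightarrow> is_dist n (p k)"
  shows "is_coupling n m p (\<lambda>xs. if xs \<in> tuples n m then \<Prod>k<m. p k (xs ! k) else 0)"
proof -
  have marginal: "(\<Sum>xs\<in>{xs\<in>tuples n m. xs ! k = i}. \<Prod>j<m. p j (xs ! j)) = p k i"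
    if "k < m" "i < n" for k i
  proof -
    define f where "f = (\<lambda>j x. if j = k then if x = i then p j x else 0 else p j x)"
    have "(\<Sum>xs\<in>{xs\<in>tuples n m. xs ! k = i}. \<Prod>j<m. p j (xs ! j))
        = (\<Sum>xs\<in>tuples n m. if xs ! k = i then \<Prod>j<m. p j (xs ! j) else 0)"
      by (simp add: sum.inter_filter[OF finite_tuples])
    also have "\<dots> = (\<Sum>xs\<in>tuples n m. \<Prod>j<m. f j (xs ! j))"
      using \<open>k < m\<close> by (intro sum.cong refl) (auto simp: f_def intro!: prod.cong prod_zero)
    also have "\<dots> = (\<Prod>j<m. \<Sum>x<n. f j x)" by (rule sum_tuples_prod)
    also have "\<dots> = (\<Prod>j<m. if j = k then p k i else 1)"
      using that assms by (intro prod.cong refl) (auto simp: f_def is_dist_def)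
    also have "\<dots> = p k i" using \<open>k < m\<close> by (simp add: prod.delta)
    finally show ?thesis .
  qed
  have "(\<Sum>xs\<in>tuples n m. \<Prod>k<m. p k (xs ! k)) = 1"
    using assms by (simp add: sum_tuples_prod is_dist_def)
  with assms marginal show ?thesis
    by (auto simp: is_coupling_def is_dist_def tuples_def subset_iff intro!: prod_nonneg)
qed

definition marginal :: "nat \<Rightarrow> nat \<Rightarrow> (nat list \<Rightarrow> real) \<Rightarrow> nat \<Rightarrow> nat \<Rightarrow> real" where
  "marginal n m d k i = (\<Sum>xs\<in>{xs\<in>tuples n m. xs ! k = i}. d xs)"

definition marginal_kernel :: "nat \<Rightarrow> nat \<Rightarrow> nat list set \<Rightarrow> (nat list \<Rightarrow> real) set" where
  "marginal_kernel n m S = {d. (\<forall>xs. xs \<notin> S \<longrightarrow> d xs = 0) \<and> (\<forall>k<m. \<forall>i<n. marginal n m d k i = 0)}"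

definition rigid :: "nat \<Rightarrow> nat \<Rightarrow> (nat list \<Rightarrow> real) \<Rightarrow> bool" where
  "rigid n m P \<longleftrightarrow> (\<forall>d\<in>marginal_kernel n m (support n m P). \<forall>xs. d xs = 0)"

text \<open>Couplings are constrained only on tuples; fixing them to 0 elsewhere makes a rigid coupling
  determined by its support.\<close>

definition vanishes_off_tuples :: "nat \<Rightarrow> nat \<Rightarrow> (nat list \<Rightarrow> real) \<Rightarrow> bool" where
  "vanishes_off_tuples n m P \<longleftrightarrow> (\<forall>xs. xs \<notin> tuples n m \<longrightarrow> P xs = 0)"

lemma support_subset_tuples: "support n m P \<subseteq> tuples n m"
  by (auto simp: support_def)

lemma finite_support: "finite (support n m P)"
  using finite_subset[OF support_subset_tuples finite_tuples] .

lemma marginal_coupling: "is_coupling n m p P \<Longrightarrow> k < m \<Longrightarrow> i < n \<Longrightarrow> marginal n m P k i = p k i"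
  by (simp add: is_coupling_def marginal_def)

lemma marginal_add_scaled:
  "marginal n m (\<lambda>xs. Q xs + t * d xs) k i = marginal n m Q k i + t * marginal n m d k i"
  by (simp add: marginal_def sum.distrib sum_distrib_left)

lemma sum_tuples_eq_sum_marginal:
  assumes "k < m"
  shows "(\<Sum>xs\<in>tuples n m. d xs) = (\<Sum>i<n. marginal n m d k i)"
  unfolding marginal_def using assms
  by (intro sum.group[symmetric] finite_tuples) (auto simp: tuples_def subset_iff)

lemma sum_marginal_kernel:
  assumes "m \<ge> 1" "d \<in> marginal_kernel n m S"
  shows "(\<Sum>xs\<in>tuples n m. d xs) = 0"
  using assms sum_tuples_eq_sum_marginal[where k=0 and d=d] by (simp add: marginal_kernel_def)

lemma uminus_marginal_kernel:
  "d \<in> marginal_kernel n m S \<Longrightarrow> (\<lambda>xs. - d xs) \<in> marginal_kernel n m S"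
  by (simp add: marginal_kernel_def marginal_def sum_negf)

lemma marginal_kernel_negative_point:
  assumes "m \<ge> 1" "S \<subseteq> tuples n m" "d \<in> marginal_kernel n m S" "d u \<noteq> 0"
  obtains v where "v \<in> S" "d v < 0"
proof -
  have "\<exists>v\<in>S. d v < 0"
  proof (rule ccontr)
    assume "\<not> (\<exists>v\<in>S. d v < 0)"
    then have nonneg: "\<forall>v\<in>S. d v \<ge> 0" by force
    have "(\<Sum>v\<in>S. d v) = (\<Sum>v\<in>tuples n m. d v)"
      using assms(2,3) by (intro sum.mono_neutral_left finite_tuples) (auto simp: marginal_kernel_def)
    also have "\<dots> = 0" using sum_marginal_kernel assms(1,3) .
    finally have "\<forall>v\<in>S. d v = 0"
      using nonneg finite_subset[OF assms(2) finite_tuples] by (simp add: sum_nonneg_eq_0_iff)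
    then show False using assms(3,4) by (auto simp: marginal_kernel_def)
  qed
  with that show thesis by blast
qed

lemma is_coupling_shift:
  assumes "is_coupling n m p Q" "m \<ge> 1" "d \<in> marginal_kernel n m S"
    and "\<And>xs. xs \<in> tuples n m \<Longrightarrow> Q xs + t * d xs \<ge> 0"
  shows "is_coupling n m p (\<lambda>xs. Q xs + t * d xs)"
proof -
  have "(\<Sum>xs\<in>tuples n m. Q xs + t * d xs) = (\<Sum>xs\<in>tuples n m. Q xs) + t * (\<Sum>xs\<in>tuples n m. d xs)"
    by (simp add: sum.distrib sum_distrib_left)
  with assms sum_marginal_kernel show ?thesis
    using marginal_add_scaled[of n m Q t d] marginal_coupling[OF assms(1)]
    by (auto simp: is_coupling_def marginal_kernel_def marginal_def[symmetric])
qed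

lemma coupling_shift_shrinks_support:
  assumes Q: "is_coupling n m p Q" and "m \<ge> 1"
    and d: "d \<in> marginal_kernel n m (support n m Q)"
    and u: "u \<in> support n m Q" "d u < 0"
  obtains t where "t > 0" "is_coupling n m p (\<lambda>xs. Q xs + t * d xs)"
    "card (support n m (\<lambda>xs. Q xs + t * d xs)) < card (support n m Q)"
proof -
  let ?S = "support n m Q"
  let ?ratio = "\<lambda>v. Q v / - d v"
  let ?R = "{v \<in> ?S. d v < 0}"
  have "finite ?R" "?R \<noteq> {}" using finite_support u by auto
  then obtain v where v: "v \<in> ?R" and v_min: "\<And>w. w \<in> ?R \<Longrightarrow> ?ratio v \<le> ?ratio w"
    using ex_is_arg_min_if_finite[of ?R ?ratio] by (auto simp: is_arg_min_linorder)
  \<comment> \<open>The largest step keeping Q + t d nonnegative; it makes Q + t d vanish at v.\<close>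
  define t where "t = ?ratio v"
  let ?Q' = "\<lambda>xs. Q xs + t * d xs"
  have Q_nonneg: "Q w \<ge> 0" if "w \<in> tuples n m" for w
    using Q that by (simp add: is_coupling_def)
  have d_off: "d w = 0" if "w \<notin> ?S" for w
    using d that by (simp add: marginal_kernel_def)
  have "Q v > 0" using v Q_nonneg by (force simp: support_def)
  then have t: "t > 0" using v by (simp add: t_def divide_pos_neg)
  have "?Q' w \<ge> 0" if "w \<in> tuples n m" for w
  proof (cases "d w < 0")
    case True
    then have "w \<in> ?S" using d_off by force
    then have "t \<le> ?ratio w" using True v_min by (simp add: t_def)
    then show ?thesis using True by (simp add: field_simps)
  next
    case False
    then show ?thesis using Q_nonneg[OF that] t by simp
  qed
  then have coupling: "is_coupling n m p ?Q'"
    using is_coupling_shift[OF Q \<open>m \<ge> 1\<close> d] by blast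
  have "support n m ?Q' \<subseteq> ?S - {v}"
    using v d_off by (auto simp: support_def t_def)
  then have "support n m ?Q' \<subset> ?S" using v by blast
  then have "card (support n m ?Q') < card ?S" by (simp add: psubset_card_mono finite_support)
  with t coupling show ?thesis by (rule that)
qed

lemma non_rigid_coupling_splits:
  assumes m: "m \<ge> 1" and Q: "is_coupling n m p Q" "vanishes_off_tuples n m Q"
    and "\<not> rigid n m Q"
  obtains Q1 Q2 l where
    "is_coupling n m p Q1" "vanishes_off_tuples n m Q1" "card (support n m Q1) < card (support n m Q)"
    "is_coupling n m p Q2" "vanishes_off_tuples n m Q2" "card (support n m Q2) < card (support n m Q)"
    "0 \<le> l" "l \<le> 1" "Q = (\<lambda>xs. l * Q1 xs + (1 - l) * Q2 xs)"
proof -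
  let ?S = "support n m Q"
  obtain d u where d: "d \<in> marginal_kernel n m ?S" and "d u \<noteq> 0"
    using \<open>\<not> rigid n m Q\<close> unfolding rigid_def by blast
  have d': "(\<lambda>xs. - d xs) \<in> marginal_kernel n m ?S" using d by (rule uminus_marginal_kernel)
  obtain u1 where "u1 \<in> ?S" "d u1 < 0"
    using marginal_kernel_negative_point[OF m support_subset_tuples d \<open>d u \<noteq> 0\<close>] .
  with coupling_shift_shrinks_support[OF Q(1) m d]
  obtain a where a: "a > 0" "is_coupling n m p (\<lambda>xs. Q xs + a * d xs)"
    "card (support n m (\<lambda>xs. Q xs + a * d xs)) < card ?S" by blast
  obtain u2 where "u2 \<in> ?S" "- d u2 < 0"
    using marginal_kernel_negative_point[OF m support_subset_tuples d'] \<open>d u \<noteq> 0\<close> by auto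
  with coupling_shift_shrinks_support[OF Q(1) m d']
  obtain b where b: "b > 0" "is_coupling n m p (\<lambda>xs. Q xs + b * - d xs)"
    "card (support n m (\<lambda>xs. Q xs + b * - d xs)) < card ?S" by blast
  have vanishes: "vanishes_off_tuples n m (\<lambda>xs. Q xs + t * e xs)"
    if "e \<in> marginal_kernel n m ?S" for t e
    using Q(2) that support_subset_tuples[of n m Q]
    by (auto simp: vanishes_off_tuples_def marginal_kernel_def)
  define l where "l = b / (a + b)"
  have "l * a - (1 - l) * b = 0" using a b by (simp add: l_def field_simps)
  moreover have "l * (Q xs + a * d xs) + (1 - l) * (Q xs + b * - d xs)
      = Q xs + (l * a - (1 - l) * b) * d xs" for xs
    by (simp add: algebra_simps)
  ultimately have "Q = (\<lambda>xs. l * (Q xs + a * d xs) + (1 - l) * (Q xs + b * - d xs))"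
    by simp
  moreover have "0 \<le> l" "l \<le> 1" using a b by (auto simp: l_def)
  ultimately show thesis
    using that[OF a(2) vanishes[OF d] a(3) b(2) vanishes[OF d'] b(3)] by blast
qed

lemma exists_rigid_coupling_le_entropy:
  assumes "m \<ge> 1" "is_coupling n m p Q" "vanishes_off_tuples n m Q"
  shows "\<exists>P. is_coupling n m p P \<and> rigid n m P \<and> vanishes_off_tuples n m P \<and>
             entropy n m P \<le> entropy n m Q"
  using assms(2,3)
proof (induction "card (support n m Q)" arbitrary: Q rule: less_induct)
  case less
  show ?case
  proof (cases "rigid n m Q")
    case True
    with less.prems show ?thesis by blast
  next
    case False
    with assms(1) less.prems obtain Q1 Q2 l where
      Q1: "is_coupling n m p Q1" "vanishes_off_tuples n m Q1" "card (support n m Q1) < card (support n m Q)"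
      and Q2: "is_coupling n m p Q2" "vanishes_off_tuples n m Q2" "card (support n m Q2) < card (support n m Q)"
      and l: "0 \<le> l" "l \<le> 1" and Q_eq: "Q = (\<lambda>xs. l * Q1 xs + (1 - l) * Q2 xs)"
      by (rule non_rigid_coupling_splits)
    have "min (entropy n m Q1) (entropy n m Q2) \<le> entropy n m Q"
      unfolding Q_eq using Q1(1) Q2(1) l
      by (intro entropy_convex_combination_ge_min) (auto simp: is_coupling_def)
    then consider "entropy n m Q1 \<le> entropy n m Q" | "entropy n m Q2 \<le> entropy n m Q"
      unfolding min_le_iff_disj by blast
    then show ?thesis
      using less.hyps[OF Q1(3) Q1(1,2)] less.hyps[OF Q2(3) Q2(1,2)] by cases (meson order_trans)+
  qed
qed

lemma rigid_coupling_determined_by_support: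
  assumes P1: "is_coupling n m p P1" "rigid n m P1" "vanishes_off_tuples n m P1"
    and P2: "is_coupling n m p P2" "vanishes_off_tuples n m P2"
    and same_support: "support n m P1 = support n m P2"
  shows "P1 = P2"
proof -
  have "(\<lambda>xs. P1 xs - P2 xs) \<in> marginal_kernel n m (support n m P1)"
    using P1 P2 same_support marginal_coupling[OF P1(1)] marginal_coupling[OF P2(1)]
    by (auto simp: marginal_kernel_def vanishes_off_tuples_def support_def marginal_def sum_subtractf)
  with P1(2) have "\<forall>xs. P1 xs - P2 xs = 0" unfolding rigid_def by (rule bspec)
  then show ?thesis by auto
qed

lemma all_marginals_zero_if_reduced_marginals_zero:
  assumes "\<forall>i<n. marginal n m d 0 i = 0" "\<forall>k<m. \<forall>i<n - 1. marginal n m d k i = 0"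
  shows "\<forall>k<m. \<forall>i<n. marginal n m d k i = 0"
proof (intro allI impI)
  fix k i assume k: "k < m" and i: "i < n"
  show "marginal n m d k i = 0"
  proof (cases "k = 0 \<or> i < n - 1")
    case True
    then show ?thesis using assms k i by auto
  next
    case False
    then have i_last: "i = n - 1" using i by linarith
    \<comment> \<open>All marginals have the same total, fixed to 0 by the marginal at coordinate 0.\<close>
    have "(\<Sum>i<n. marginal n m d k i) = (\<Sum>i<n. marginal n m d 0 i)"
      using k sum_tuples_eq_sum_marginal[where d = d, of k m] sum_tuples_eq_sum_marginal[where d = d, of 0 m]
      by simp
    also have "\<dots> = 0" using assms(1) by simp
    also have "(\<Sum>i<n. marginal n m d k i) = (\<Sum>i<n - 1. marginal n m d k i) + marginal n m d k i"
      using i i_last by (metis Suc_pred' bot_nat_0.extremum_strict sum.lessThan_Suc zero_less_iff_neq_zero)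
    finally show ?thesis using assms(2) k by simp
  qed
qed

lemma card_support_rigid:
  assumes "m \<ge> 1" "rigid n m P"
  shows "card (support n m P) \<le> n * m - (m - 1)"
proof (rule ccontr)
  let ?S = "support n m P"
  \<comment> \<open>The marginal equations that remain after dropping the last state of every coordinate but 0.\<close>
  define E where "E = ({0} \<times> {..<n}) \<union> ({1..<m} \<times> {..<n - 1})"
  have "card E = n + (m - 1) * (n - 1)"
    unfolding E_def by (subst card_Un_disjoint) (auto simp: card_cartesian_product)
  also have "\<dots> = n * m - (m - 1)"
    using assms(1) by (cases n; cases m) (auto simp: algebra_simps)
  finally have card_E: "card E = n * m - (m - 1)" .
  assume "\<not> card ?S \<le> n * m - (m - 1)"
  then have "card E < card ?S" using card_E by simp
  moreover have "finite E" by (simp add: E_def)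
  ultimately obtain x :: "nat list \<Rightarrow> real" where
    x_off: "\<forall>u. u \<notin> ?S \<longrightarrow> x u = 0" and x_nonzero: "\<exists>u\<in>?S. x u \<noteq> 0" and
    x_eqs: "\<forall>e\<in>E. (\<Sum>u\<in>?S. of_bool (u ! fst e = snd e) * x u) = 0"
    using homogeneous_system_nontrivial_solution[where c = "\<lambda>e u. of_bool (u ! fst e = snd e)",
        OF _ finite_support] by blast
  have marginal_x: "marginal n m x k i = (\<Sum>u\<in>?S. of_bool (u ! k = i) * x u)" for k i
    unfolding marginal_def sum.inter_filter[OF finite_tuples]
    using x_off by (auto intro!: sum.mono_neutral_cong_right finite_tuples support_subset_tuples)
  have x_E: "marginal n m x k i = 0" if "(k, i) \<in> E" for k i
    using bspec[OF x_eqs that] by (simp add: marginal_x)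
  have "\<forall>k<m. \<forall>i<n. marginal n m x k i = 0"
    by (intro all_marginals_zero_if_reduced_marginals_zero) (auto intro!: x_E simp: E_def)
  with x_off have "x \<in> marginal_kernel n m ?S" by (simp add: marginal_kernel_def)
  with assms(2) x_nonzero show False by (auto simp: rigid_def)
qed

lemma coupling_restrict_to_tuples:
  fixes n m :: nat and Q :: "nat list \<Rightarrow> real"
  defines "Q' \<equiv> \<lambda>xs. if xs \<in> tuples n m then Q xs else 0"
  assumes "is_coupling n m p Q"
  shows "is_coupling n m p Q'" "vanishes_off_tuples n m Q'" "entropy n m Q' = entropy n m Q"
proof -
  have "sum Q' A = sum Q A" if "A \<subseteq> tuples n m" for A
    using that by (intro sum.cong) (auto simp: Q'_def)
  with assms show "is_coupling n m p Q'"
    by (simp add: is_coupling_def Q'_def)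
  show "vanishes_off_tuples n m Q'" by (simp add: vanishes_off_tuples_def Q'_def)
  show "entropy n m Q' = entropy n m Q"
    unfolding entropy_def by (intro sum.cong) (auto simp: Q'_def)
qed

lemma exists_rigid_min_entropy_coupling:
  assumes "m \<ge> 1" "\<And>k. k < m \<Longrightarrow> is_dist n (p k)"
  shows "\<exists>P. is_min_entropy_coupling n m p P \<and> rigid n m P"
proof -
  define C where "C = {P. is_coupling n m p P \<and> rigid n m P \<and> vanishes_off_tuples n m P}"
  have below: "\<exists>P\<in>C. entropy n m P \<le> entropy n m Q" if "is_coupling n m p Q" for Q
    using exists_rigid_coupling_le_entropy[OF assms(1) coupling_restrict_to_tuples(1,2)[OF that]]
      coupling_restrict_to_tuples(3)[OF that] by (auto simp: C_def)
  have "inj_on (support n m) C"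
    by (rule inj_onI) (auto simp: C_def intro: rigid_coupling_determined_by_support)
  then have "finite C"
    using support_subset_tuples finite_tuples by (fastforce intro: inj_on_finite[of _ _ "Pow (tuples n m)"])
  moreover have "C \<noteq> {}" using below[OF is_coupling_product[OF assms(2)]] by blast
  ultimately obtain P where P: "P \<in> C" and P_min: "\<And>R. R \<in> C \<Longrightarrow> entropy n m P \<le> entropy n m R"
    using ex_is_arg_min_if_finite[of C "entropy n m"] by (auto simp: is_arg_min_linorder)
  have "entropy n m P \<le> entropy n m Q" if "is_coupling n m p Q" for Q
    using below[OF that] P_min order_trans by blast
  with P show ?thesis by (auto simp: is_min_entropy_coupling_def C_def)
qed

theorem lemma1:
  fixes n m :: nat and p :: "nat \<Rightarrow> nat \<Rightarrow> real"
  assumes "m \<ge> 1"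
    and "\<And>k. k < m \<Longrightarrow> is_dist n (p k)"
  shows "\<exists>P. is_min_entropy_coupling n m p P \<and> card (support n m P) \<le> n * m - (m - 1)"
proof -
  obtain P where "is_min_entropy_coupling n m p P" "rigid n m P"
    using exists_rigid_min_entropy_coupling[of m n p] assms by blast
  with card_support_rigid[OF assms(1)] show ?thesis by blast
qed

end
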